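(* Let $A_1,\ldots,A_n$ be events in a probability space, let $X$ be the number of these events that occur, and for $1\le j\le n$ let $S_j=\sum_{1\le i_1<\cdots<i_j\le n}P(A_{i_1}\cdots A_{i_j})$ (with $S_j=0$ for $j>n$). Then for all integers $r\ge 1$ and $k\ge r$, $$P(X\ge r)=\sum_{j=r}^{k}(-1)^{r+j}\binom{j-1}{r-1}S_j+(-1)^{r+k+1}\sum_{i=1}^{r}\binom{k-i}{r-i}E\left[\binom{X-i}{k-i+1}\right].$$
   Context: Binomial convention: for integers $s,t$, $\binom{t}{s}=0$ if $\min(s,t)<0$ or $s>t$; otherwise $\binom{t}{s}=\frac{t!}{s!(t-s)!}$. $A_{i_1}\cdots A_{i_j}$ denotes the intersection of the events. *)

theory Defs
  imports "HOL-Probability.Probability"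
begin

definition ibinom :: "int \<Rightarrow> int \<Rightarrow> int" where
  "ibinom t s = (if min s t < 0 \<or> s > t then 0 else int (nat t choose nat s))"

definition count_events :: "(nat \<Rightarrow> 'a set) \<Rightarrow> nat \<Rightarrow> 'a \<Rightarrow> nat" where
  "count_events A n w = card {i \<in> {1..n}. w \<in> A i}"

definition S_sum :: "'a measure \<Rightarrow> (nat \<Rightarrow> 'a set) \<Rightarrow> nat \<Rightarrow> nat \<Rightarrow> real" where
  "S_sum M A n j = (\<Sum>I\<in>{I. I \<subseteq> {1..n} \<and> card I = j}. measure M (\<Inter>i\<in>I. A i))"

end

theory Submission
  imports Defs
begin

(* Let X count the events that occur. A j-element index set contributes to S_j exactly when all
   of its events occur, so S_j = E[C(X, j)], and the theorem is the expectation of an identity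
   between functions of a natural number x:
     [x >= r] = sum_{j=r..k} (-1)^(r+j) C(j-1, r-1) C(x, j) + (-1)^(r+k+1) R_k(x),
     R_k(x) = sum_{i=1..r} C(k-i, r-i) C(x-i, k-i+1).
   For x < r both sides vanish; for x >= r it follows by induction on k from R_r(x) = C(x, r) - 1 and
   R_k(x) + R_(k+1)(x) = C(k, r-1) C(x, k+1), the new term of the alternating sum; both are
   telescoping sums of Pascal's rule. *)

(* Truncated subtraction matches the paper's convention: for i > x the factor is
   0 choose (k - i + 1) = 0. *)
definition bonferroni_remainder :: "nat \<Rightarrow> nat \<Rightarrow> nat \<Rightarrow> nat" where
  "bonferroni_remainder r k x = (\<Sum>i=1..r. ((k - i) choose (r - i)) * ((x - i) choose (k - i + 1)))"

lemma sum_telescope_down: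
  fixes f :: "nat \<Rightarrow> 'a :: ab_group_add"
  shows "(\<Sum>i=1..m. f (i - 1) - f i) = f 0 - f m"
  using sum_telescope''[of 0 m "\<lambda>i. - f i"] by simp

lemma bonferroni_remainder_diagonal:
  assumes "1 \<le> r" "r \<le> x"
  shows "bonferroni_remainder r r x + 1 = x choose r"
proof -
  have "int ((x - i) choose (r - i + 1)) = int ((x - (i - 1)) choose (r - (i - 1))) - int ((x - i) choose (r - i))"
    if "1 \<le> i" "i \<le> r" for i
  proof -
    have "x - (i - 1) = Suc (x - i)" "r - (i - 1) = Suc (r - i)" using that assms by auto
    then show ?thesis by simp
  qed
  then have "int (bonferroni_remainder r r x) = (\<Sum>i=1..r. int ((x - (i - 1)) choose (r - (i - 1))) - int ((x - i) choose (r - i)))"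
    unfolding bonferroni_remainder_def of_nat_sum by (intro sum.cong) auto
  also have "\<dots> = int (x choose r) - 1"
    by (subst sum_telescope_down[where f = "\<lambda>i. int ((x - i) choose (r - i))"]) simp
  finally show ?thesis by linarith
qed

lemma bonferroni_remainder_Suc:
  assumes "1 \<le> r" "r \<le> k" "r \<le> x"
  shows "bonferroni_remainder r k x + bonferroni_remainder r (Suc k) x = (k choose (r - 1)) * (x choose Suc k)"
proof -
  define g where "g i = (if i < r then int ((k - i) choose (r - 1 - i)) * int ((x - i) choose (k + 1 - i)) else 0)" for i
  (* Pascal's rule, applied to both factors of g (i - 1). *)
  have "int ((k - i) choose (r - i)) * int ((x - i) choose (k - i + 1))
          + int ((Suc k - i) choose (r - i)) * int ((x - i) choose (Suc k - i + 1)) = g (i - 1) - g i"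
    if i: "1 \<le> i" "i \<le> r" for i
  proof -
    define p y where "p = k - i" and "y = x - i"
    have shift: "k - (i - 1) = Suc p" "Suc k - i = Suc p" "x - (i - 1) = Suc y" "k - i + 1 = Suc p"
      "Suc k - i + 1 = Suc (Suc p)" "k + 1 - (i - 1) = Suc (Suc p)" "k + 1 - i = Suc p"
      using i assms unfolding p_def y_def by auto
    show ?thesis
    proof (cases "i < r")
      case True
      define q where "q = r - 1 - i"
      have q: "r - i = Suc q" "r - 1 - (i - 1) = Suc q" "r - 1 - i = q"
        using True i unfolding q_def by auto
      show ?thesis
        using True i unfolding g_def shift p_def[symmetric] y_def[symmetric] q by (simp add: algebra_simps)
    next
      case False
      then show ?thesis using i shift unfolding g_def p_def[symmetric] y_def[symmetric] by simp
    qed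
  qed
  then have "int (bonferroni_remainder r k x + bonferroni_remainder r (Suc k) x) = (\<Sum>i=1..r. g (i - 1) - g i)"
    unfolding bonferroni_remainder_def of_nat_add of_nat_sum sum.distrib[symmetric] of_nat_mult
    by (intro sum.cong) auto
  also have "\<dots> = g 0 - g r"
    by (rule sum_telescope_down)
  also have "\<dots> = int ((k choose (r - 1)) * (x choose Suc k))"
    using assms by (simp add: g_def)
  finally show ?thesis by linarith
qed

lemma bonferroni_remainder_eq_0:
  assumes "r \<le> k" "x < r"
  shows "bonferroni_remainder r k x = 0"
  unfolding bonferroni_remainder_def using assms by (intro sum.neutral) auto

lemma of_bool_ge_eq_bonferroni:
  assumes "1 \<le> r" "r \<le> k"
  shows "(of_bool (r \<le> x) :: 'a :: comm_ring_1) =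
    (\<Sum>j=r..k. (-1) ^ (r + j) * of_nat ((j - 1) choose (r - 1)) * of_nat (x choose j))
    + (-1) ^ (r + k + 1) * of_nat (bonferroni_remainder r k x)"
proof (cases "r \<le> x")
  case False
  have "(\<Sum>j=r..k. (-1) ^ (r + j) * of_nat ((j - 1) choose (r - 1)) * of_nat (x choose j)) = (0 :: 'a)"
    using False by (intro sum.neutral) (auto simp: binomial_eq_0)
  then show ?thesis using False assms by (simp add: bonferroni_remainder_eq_0)
next
  case True
  show ?thesis using assms(2)
  proof (induction k rule: dec_induct)
    case base
    have "of_nat (x choose r) = of_nat (bonferroni_remainder r r x) + (1 :: 'a)"
      using bonferroni_remainder_diagonal[OF assms(1) True] by (metis of_nat_1 of_nat_add)
    then show ?case using True by (simp add: algebra_simps)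
  next
    case (step m)
    define c :: 'a where "c = of_nat (m choose (r - 1)) * of_nat (x choose Suc m)"
    have sum: "(\<Sum>j=r..Suc m. (-1) ^ (r + j) * of_nat ((j - 1) choose (r - 1)) * of_nat (x choose j)) =
        (\<Sum>j=r..m. (-1) ^ (r + j) * of_nat ((j - 1) choose (r - 1)) * of_nat (x choose j)) + (-1) ^ (r + m + 1) * c"
      using step(1) unfolding c_def by (simp add: mult.assoc)
    have rem: "of_nat (bonferroni_remainder r (Suc m) x) = c - of_nat (bonferroni_remainder r m x)"
      using bonferroni_remainder_Suc[OF assms(1) step(1) True] unfolding c_def
      by (metis add_diff_cancel_left' of_nat_add of_nat_mult)
    have sign: "(-1) ^ (r + Suc m + 1) = - ((-1) ^ (r + m + 1) :: 'a)"
      by simp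
    show ?case using step(3) True unfolding sum rem sign by (simp add: algebra_simps)
  qed
qed

lemma (in finite_measure) integrable_fun_of_bounded_nat:
  fixes f :: "nat \<Rightarrow> real"
  assumes X: "X \<in> M \<rightarrow>\<^sub>M count_space UNIV" and bounded: "\<And>w. w \<in> space M \<Longrightarrow> X w \<le> n"
  shows "integrable M (\<lambda>w. f (X w))"
proof (rule integrable_const_bound[where B = "Max ((\<lambda>m. norm (f m)) ` {..n})"])
  show "AE w in M. norm (f (X w)) \<le> Max ((\<lambda>m. norm (f m)) ` {..n})"
    using bounded by (intro AE_I2 Max_ge) auto
  show "(\<lambda>w. f (X w)) \<in> borel_measurable M"
    using X by simp
qed

lemma (in prob_space) prob_ge_eq_bonferroni:
  assumes X: "X \<in> M \<rightarrow>\<^sub>M count_space UNIV" and bounded: "\<And>w. w \<in> space M \<Longrightarrow> X w \<le> n"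
    and r: "1 \<le> r" "r \<le> k"
  shows "prob {w \<in> space M. r \<le> X w} =
    (\<Sum>j=r..k. (-1) ^ (r + j) * real ((j - 1) choose (r - 1)) * expectation (\<lambda>w. real (X w choose j)))
    + (-1) ^ (r + k + 1) * (\<Sum>i=1..r. real ((k - i) choose (r - i)) *
        expectation (\<lambda>w. real ((X w - i) choose (k - i + 1))))"
proof -
  note integrable = integrable_fun_of_bounded_nat[OF X bounded]
  define F where "F w = (\<Sum>j=r..k. (-1) ^ (r + j) * real ((j - 1) choose (r - 1)) * real (X w choose j))" for w
  define G where "G w = (\<Sum>i=1..r. real ((k - i) choose (r - i)) * real ((X w - i) choose (k - i + 1)))" for w
  have "prob {w \<in> space M. r \<le> X w} = expectation (indicator {w \<in> space M. r \<le> X w})"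
    by (simp add: Int_absorb2)
  also have "\<dots> = expectation (\<lambda>w. F w + (-1) ^ (r + k + 1) * G w)"
  proof (intro Bochner_Integration.integral_cong refl)
    fix w assume "w \<in> space M"
    then show "indicator {w \<in> space M. r \<le> X w} w = F w + (-1) ^ (r + k + 1) * G w"
      using of_bool_ge_eq_bonferroni[OF r, of "X w", where 'a = real]
      unfolding indicator_def F_def G_def by (simp add: bonferroni_remainder_def)
  qed
  also have "\<dots> = expectation F + (-1) ^ (r + k + 1) * expectation G"
    unfolding F_def G_def by (subst Bochner_Integration.integral_add) (auto intro: integrable)
  also have "expectation F = (\<Sum>j=r..k. (-1) ^ (r + j) * real ((j - 1) choose (r - 1)) * expectation (\<lambda>w. real (X w choose j)))"
    unfolding F_def by (subst Bochner_Integration.integral_sum) (auto intro: integrable)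
  also have "expectation G = (\<Sum>i=1..r. real ((k - i) choose (r - i)) * expectation (\<lambda>w. real ((X w - i) choose (k - i + 1))))"
    unfolding G_def by (subst Bochner_Integration.integral_sum) (auto intro: integrable)
  finally show ?thesis .
qed

lemma count_events_le: "count_events A n w \<le> n"
proof -
  have "count_events A n w \<le> card {1..n}"
    unfolding count_events_def by (rule card_mono) auto
  then show ?thesis by simp
qed

lemma measurable_count_events:
  assumes "\<And>i. i \<in> {1..n} \<Longrightarrow> A i \<in> sets M"
  shows "count_events A n \<in> M \<rightarrow>\<^sub>M count_space UNIV"
proof -
  have "count_events A n = (\<lambda>w. \<Sum>i\<in>{1..n}. if w \<in> A i then 1 else 0)"
    unfolding count_events_def by (auto simp: sum.If_cases Int_def)
  also have "\<dots> \<in> M \<rightarrow>\<^sub>M count_space UNIV"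
    using assms by (intro measurable_sum_nat measurable_If_set) auto
  finally show ?thesis .
qed

lemma (in finite_measure) S_sum_eq_integral_choose:
  assumes A: "\<And>i. i \<in> {1..n} \<Longrightarrow> A i \<in> sets M" and "1 \<le> j"
  shows "S_sum M A n j = (\<integral>w. real (count_events A n w choose j) \<partial>M)"
proof -
  let ?J = "{I. I \<subseteq> {1..n} \<and> card I = j}"
  have "finite ?J"
    by (rule finite_subset[of _ "Pow {1..n}"]) auto
  have sets_Inter: "(\<Inter>i\<in>I. A i) \<in> sets M" if "I \<in> ?J" for I
  proof -
    have "I \<noteq> {}" "finite I" using that \<open>1 \<le> j\<close> finite_subset[of I "{1..n}"] by auto
    then show ?thesis using that A by (intro sets.finite_INT) auto
  qed
  have "S_sum M A n j = (\<Sum>I\<in>?J. \<integral>w. indicator (\<Inter>i\<in>I. A i) w \<partial>M)"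
    unfolding S_sum_def using sets_Inter sets.sets_into_space
    by (intro sum.cong refl) (simp add: Int_absorb2)
  also have "\<dots> = (\<integral>w. (\<Sum>I\<in>?J. indicator (\<Inter>i\<in>I. A i) w) \<partial>M)"
    using sets_Inter by (intro Bochner_Integration.integral_sum[symmetric]) (auto simp: emeasure_eq_measure)
  also have "\<dots> = (\<integral>w. real (count_events A n w choose j) \<partial>M)"
  proof (rule Bochner_Integration.integral_cong[OF refl])
    fix w
    let ?Iw = "{i \<in> {1..n}. w \<in> A i}"
    have "(\<Sum>I\<in>?J. indicator (\<Inter>i\<in>I. A i) w :: real) = real (card {I \<in> ?J. I \<subseteq> ?Iw})"
      using \<open>finite ?J\<close> by (simp add: indicator_def sum.If_cases Int_def) (intro arg_cong[where f = card]; auto)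
    also have "{I \<in> ?J. I \<subseteq> ?Iw} = {I. I \<subseteq> ?Iw \<and> card I = j}"
      by auto
    also have "card \<dots> = card ?Iw choose j"
      by (rule n_subsets) auto
    finally show "(\<Sum>I\<in>?J. indicator (\<Inter>i\<in>I. A i) w :: real) = real (count_events A n w choose j)"
      unfolding count_events_def by simp
  qed
  finally show ?thesis .
qed

lemma ibinom_of_nat: "ibinom (int a) (int b) = int (a choose b)"
  by (auto simp: ibinom_def)

lemma ibinom_diff_of_nat:
  assumes "c \<le> b" "c \<le> a \<or> c < b"
  shows "ibinom (int a - int c) (int b - int c) = int ((a - c) choose (b - c))"
proof (cases "c \<le> a")
  case True
  then show ?thesis
    using assms ibinom_of_nat[of "a - c" "b - c"] by simp
next
  case False
  then show ?thesis
    using assms by (simp add: ibinom_def)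
qed

theorem theorem2:
  fixes M :: "'a measure" and A :: "nat \<Rightarrow> 'a set" and n r k :: nat
  assumes "prob_space M"
    and "\<And>i. i \<in> {1..n} \<Longrightarrow> A i \<in> sets M"
    and "1 \<le> r" and "r \<le> k"
  shows "measure M {w \<in> space M. count_events A n w \<ge> r} =
      (\<Sum>j=r..k. (-1) ^ (r + j) * real_of_int (ibinom (int j - 1) (int r - 1)) * S_sum M A n j)
      + (-1) ^ (r + k + 1) * (\<Sum>i=1..r. real_of_int (ibinom (int k - int i) (int r - int i)) *
          integral\<^sup>L M (\<lambda>w. real_of_int (ibinom (int (count_events A n w) - int i) (int k - int i + 1))))"
proof -
  interpret prob_space M by fact
  have X: "count_events A n \<in> M \<rightarrow>\<^sub>M count_space UNIV"
    using assms(2) by (rule measurable_count_events)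
  have S: "expectation (\<lambda>w. real (count_events A n w choose j)) = S_sum M A n j" if "j \<in> {r..k}" for j
    using S_sum_eq_integral_choose[of n A j] assms(2,3) that by simp
  have binom_j: "real ((j - 1) choose (r - 1)) = real_of_int (ibinom (int j - 1) (int r - 1))"
    if "j \<in> {r..k}" for j
    using ibinom_diff_of_nat[of 1 r j] that assms(3) by simp
  have binom_k: "real ((k - i) choose (r - i)) = real_of_int (ibinom (int k - int i) (int r - int i))"
    if "i \<in> {1..r}" for i
    using ibinom_diff_of_nat[of i r k] that assms(4) by simp
  have binom_x: "real ((x - i) choose (k - i + 1)) = real_of_int (ibinom (int x - int i) (int k - int i + 1))"
    if "i \<in> {1..r}" for i x
    using ibinom_diff_of_nat[of i "k + 1" x] that assms(4) by (simp add: Suc_diff_le algebra_simps)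
  show ?thesis
    unfolding prob_ge_eq_bonferroni[OF X count_events_le assms(3,4)]
    by (intro arg_cong2[where f = "(+)"] arg_cong2[where f = "(*)"] sum.cong refl Bochner_Integration.integral_cong)
      (blast intro: S binom_j binom_k binom_x)+
qed

end
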